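(* For every $\beta\in(0,1)$ there is a constant $c$ such that for every $\varepsilon>0$, all positive integers $d$ and $m\le n$ with $d$ dividing $n$, every $x_1,\dots,x_n\in[-1,1]^d$, and every public-string-oblivious attacker $M$, \[ \Pr\left[\left\|\mathrm{Manip}_{m,n}(\mathtt{EST}\infty_{n,d,\varepsilon},\vec x,M)-\frac1n\sum_{i=1}^n x_i\right\|_\infty< c\cdot\frac{e^\varepsilon+1}{e^\varepsilon-1}\left(\sqrt{\frac dn\log\frac d\beta}+\frac mn\right)\right]\ge 1-\beta . \]
   Context: Randomized response: for $b\in\{\pm1\}$, $R^{RR}_\varepsilon(b)$ outputs $b\cdot\frac{e^\varepsilon+1}{e^\varepsilon-1}$ with probability $\frac{e^\varepsilon}{e^\varepsilon+1}$ and $-b\cdot\frac{e^\varepsilon+1}{e^\varepsilon-1}$ otherwise. Protocol $\mathtt{EST}\infty_{n,d,\varepsilon}$: the public randomness is a uniformly random partition $\pi$ of $[n]$ into $d$ groups $\pi(1),\dots,\pi(d)$ of size $n/d$ each. User $i$ with data $x_i\in[-1,1]^d$ in group $g(i)$ computes $x_i'\in\{\pm1\}$ with $\Pr[x_i'=+1]=\frac12+\frac{x_{i,g(i)}}{2}$, and sends $y_i\sim R^{RR}_\varepsilon(x_i')$. The aggregator outputs $z\in\mathbb R^d$ with $z_g=\frac dn\sum_{i\in\pi(g)}y_i$. Manipulation game $\mathrm{Manip}_{m,n}(\Pi,\vec x,M)$ for a protocol $\Pi$ with public randomness $S$, randomizers $R_i$ with message set $\mathcal Y$ and aggregator $A$: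 $S$ is sampled; the attacker $M$ chooses a set $C\subseteq[n]$ with $|C|=m$ and messages $y_i\in\mathcal Y$ for $i\in C$ (possibly depending on $\vec x$, $S$, and its own randomness); each $i\notin C$ independently sends $y_i\sim R_i(x_i,S)$; the output is $A(y_1,\dots,y_n,S)$. $M$ is public-string-oblivious if $C$ is chosen independently of $S$. Here the message set is $\{\pm\frac{e^\varepsilon+1}{e^\varepsilon-1}\}$. *)

theory Defs
  imports "HOL-Probability.Probability"
begin

text \<open>Users are indexed by 0..<n, coordinates / groups by 0..<d.\<close>

definition rr_scale :: "real \<Rightarrow> real" where
  "rr_scale \<epsilon> = (exp \<epsilon> + 1) / (exp \<epsilon> - 1)"

text \<open>Randomized response on b \<in> {1,-1}.\<close>
definition RR :: "real \<Rightarrow> real \<Rightarrow> real pmf" where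
  "RR \<epsilon> b = map_pmf (\<lambda>keep. if keep then b * rr_scale \<epsilon> else - b * rr_scale \<epsilon>)
              (bernoulli_pmf (exp \<epsilon> / (exp \<epsilon> + 1)))"

text \<open>Honest randomizer of a user whose relevant coordinate is v \<in> [-1,1].\<close>
definition est_randomizer :: "real \<Rightarrow> real \<Rightarrow> real pmf" where
  "est_randomizer \<epsilon> v =
     bernoulli_pmf (1/2 + v/2) \<bind> (\<lambda>b. RR \<epsilon> (if b then 1 else -1))"

text \<open>Public randomness: partitions of users 0..<n into d labelled groups 0..<d of
  size n/d each, encoded by the group-assignment map g (normalised to 0 outside 0..<n).\<close>
definition est_partitions :: "nat \<Rightarrow> nat \<Rightarrow> (nat \<Rightarrow> nat) set" where
  "est_partitions n d = {g. (\<forall>i<n. g i < d) \<and> (\<forall>i. n \<le> i \<longrightarrow> g i = 0) \<and>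
                            (\<forall>j<d. card {i. i < n \<and> g i = j} = n div d)}"

text \<open>A public-string-oblivious attacker: a distribution (its own randomness) over pairs
  (C, f) where C is the corrupted set and f maps the public string to the corrupted messages.
  Since the draw is independent of the public string, C is chosen independently of S.\<close>
definition valid_attacker ::
  "real \<Rightarrow> nat \<Rightarrow> nat \<Rightarrow> (nat set \<times> ((nat \<Rightarrow> nat) \<Rightarrow> nat \<Rightarrow> real)) pmf \<Rightarrow> bool" where
  "valid_attacker \<epsilon> m n M \<longleftrightarrow>
     (\<forall>(C, f) \<in> set_pmf M. C \<subseteq> {..<n} \<and> card C = m \<and>
        (\<forall>S i. i \<in> C \<longrightarrow> f S i \<in> {rr_scale \<epsilon>, - rr_scale \<epsilon>}))"

text \<open>Output distribution of Manip_{m,n}(EST\<infinity>_{n,d,\<epsilon>}, x, M); output vector z with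
  z j for j<d (0 elsewhere).\<close>
definition manip_est ::
  "nat \<Rightarrow> nat \<Rightarrow> real \<Rightarrow> (nat \<Rightarrow> nat \<Rightarrow> real) \<Rightarrow>
   (nat set \<times> ((nat \<Rightarrow> nat) \<Rightarrow> nat \<Rightarrow> real)) pmf \<Rightarrow> (nat \<Rightarrow> real) pmf" where
  "manip_est n d \<epsilon> x M =
     pmf_of_set (est_partitions n d) \<bind> (\<lambda>g.
     M \<bind> (\<lambda>(C, f).
     Pi_pmf {..<n} 0 (\<lambda>i. if i \<in> C then return_pmf (f g i) else est_randomizer \<epsilon> (x i (g i))) \<bind> (\<lambda>y.
     return_pmf (\<lambda>j. if j < d then real d / real n * (\<Sum>i\<in>{i. i < n \<and> g i = j}. y i) else 0))))"

end

theory Submission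
  imports Defs
begin

text \<open>
  Fix the attacker's choice (C, f); since C does not depend on the public partition, the partition
  is still uniform. The error in coordinate j then has three sources: how many corrupted users
  fall into group j, how far the honest data in group j is from its share of the total, and the
  noise of the randomizers. Group j is a uniformly random (n/d)-subset of the users, and for such a
  sample without replacement the exponential moment of a sum obeys the same Hoeffding bound as for
  independent draws; this yields Chernoff bounds for the first two sources. On a partition where
  both are below t, the messages of group j are independent and bounded by (e^eps + 1)/(e^eps - 1),
  so Hoeffding's inequality controls the noise, and each corrupted user shifts the group sum by at
  most twice that bound. A union bound over 5d events with t = c sqrt((n/d) ln(d/beta)) concludes.
\<close>

lemma sum_exp_centered_le:
  fixes a :: "'a \<Rightarrow> real" and l :: real
  assumes "finite A" "A \<noteq> {}" "\<forall>i\<in>A. \<bar>a i\<bar> \<le> 1"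
  shows "(\<Sum>i\<in>A. exp (l * (a i - (\<Sum>j\<in>A. a j) / card A))) \<le> card A * exp (l\<^sup>2 / 2)"
proof -
  have card: "real (card A) > 0" using assms by (simp add: card_gt_0_iff)
  have pos: "(\<Sum>i\<in>A. exp (l * (b i - (\<Sum>j\<in>A. b j) / card A))) \<le> card A * exp (l\<^sup>2 / 2)"
    if l: "l > 0" and b: "\<forall>i\<in>A. \<bar>b i\<bar> \<le> 1" for l and b :: "'a \<Rightarrow> real"
  proof -
    let ?p = "pmf_of_set A"
    have "set_pmf ?p = A" using assms by simp
    then interpret interval_bounded_random_variable "measure_pmf ?p" b "-1" 1
      by unfold_locales (use b in \<open>auto intro!: AE_pmfI simp: abs_le_iff\<close>)
    have E: "measure_pmf.expectation ?p b = (\<Sum>j\<in>A. b j) / card A"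
      using assms by (simp add: integral_pmf_of_set)
    have "ennreal (measure_pmf.expectation ?p (\<lambda>x. exp (l * (b x - measure_pmf.expectation ?p b))))
        = nn_integral ?p (\<lambda>x. exp (l * (b x - measure_pmf.expectation ?p b)))"
      by (intro nn_integral_eq_integral[symmetric] integrable_measure_pmf_finite) (use assms in auto)
    also have "\<dots> \<le> ennreal (exp (l\<^sup>2 * (1 - (-1))\<^sup>2 / 8))"
      by (rule Hoeffdings_lemma_nn_integral[OF l])
    finally have "(\<Sum>i\<in>A. exp (l * (b i - (\<Sum>j\<in>A. b j) / card A))) / card A \<le> exp (l\<^sup>2 / 2)"
      using assms by (simp add: E integral_pmf_of_set ennreal_le_iff power2_eq_square)
    thus ?thesis using card by (simp add: divide_le_eq mult.commute)
  qed
  consider "l > 0" | "l = 0" | "l < 0" by linarith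
  thus ?thesis
  proof cases
    case 3
    have "(\<Sum>i\<in>A. exp (l * (a i - (\<Sum>j\<in>A. a j) / card A)))
        = (\<Sum>i\<in>A. exp ((- l) * ((- a i) - (\<Sum>j\<in>A. - a j) / card A)))"
      by (simp add: sum_negf algebra_simps)
    also have "\<dots> \<le> card A * exp ((- l)\<^sup>2 / 2)"
      using 3 assms by (intro pos) auto
    finally show ?thesis by simp
  qed (use pos assms in auto)
qed

text \<open>
  With S and N the sum and size of A, removing b leaves mean (S - a b)/(N - 1). Recentring the
  exponent at S/N turns the sum into a centred one with the smaller parameter l (N - 1 - k)/(N - 1).
\<close>

lemma sum_exp_leave_one_out_le:
  fixes a :: "'a \<Rightarrow> real" and l :: real
  assumes A: "finite A" "\<forall>i\<in>A. \<bar>a i\<bar> \<le> 1" and k: "k < card A"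
  shows "(\<Sum>b\<in>A. exp (l * a b + l * k * (((\<Sum>i\<in>A. a i) - a b) / real (card A - 1))))
           \<le> card A * exp (l * real (Suc k) * ((\<Sum>i\<in>A. a i) / card A) + l\<^sup>2 / 2)"
proof -
  define N where "N = card A"
  define \<mu> where "\<mu> = (\<Sum>i\<in>A. a i) / N"
  have ne: "A \<noteq> {}" using k by auto
  show ?thesis
  proof (cases "k = 0")
    case True
    have "(\<Sum>b\<in>A. exp (l * a b)) = exp (l * \<mu>) * (\<Sum>b\<in>A. exp (l * (a b - \<mu>)))"
      by (simp add: sum_distrib_left algebra_simps flip: exp_add)
    also have "\<dots> \<le> exp (l * \<mu>) * (N * exp (l\<^sup>2 / 2))"
      using sum_exp_centered_le[OF A(1) ne A(2)] by (simp add: \<mu>_def N_def)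
    finally show ?thesis using True by (simp add: N_def \<mu>_def exp_add mult_ac)
  next
    case False
    define r where "r = (real N - 1 - k) / (real N - 1)"
    define l' where "l' = l * r"
    have N1: "real N - 1 > 0" using k False N_def by linarith
    have split: "l * a b + l * k * (((\<Sum>i\<in>A. a i) - a b) / real (N - 1))
        = l * real (Suc k) * \<mu> + l' * (a b - \<mu>)" for b
      using N1 unfolding l'_def r_def \<mu>_def by (simp add: of_nat_diff field_simps)
    have "l'\<^sup>2 \<le> l\<^sup>2"
    proof -
      have "\<bar>r\<bar> \<le> 1"
        using k N1 N_def by (auto simp: r_def abs_le_iff divide_le_eq)
      hence "\<bar>l'\<bar> \<le> \<bar>l\<bar>"
        unfolding l'_def abs_mult by (simp add: mult_left_le)
      thus ?thesis by (simp add: abs_le_square_iff)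
    qed
    have "(\<Sum>b\<in>A. exp (l * a b + l * k * (((\<Sum>i\<in>A. a i) - a b) / real (N - 1))))
        = exp (l * real (Suc k) * \<mu>) * (\<Sum>b\<in>A. exp (l' * (a b - (\<Sum>i\<in>A. a i) / card A)))"
      unfolding split by (simp add: sum_distrib_left exp_add \<mu>_def N_def)
    also have "\<dots> \<le> exp (l * real (Suc k) * \<mu>) * (N * exp (l'\<^sup>2 / 2))"
      using sum_exp_centered_le[OF A(1) ne A(2)] by (simp add: N_def)
    also have "\<dots> \<le> exp (l * real (Suc k) * \<mu>) * (N * exp (l\<^sup>2 / 2))"
      using \<open>l'\<^sup>2 \<le> l\<^sup>2\<close> by (intro mult_left_mono) auto
    finally show ?thesis by (simp add: N_def \<mu>_def exp_add mult_ac)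
  qed
qed

definition k_subsets :: "'a set \<Rightarrow> nat \<Rightarrow> 'a set set" where
  "k_subsets A k = {T. T \<subseteq> A \<and> card T = k}"

lemma finite_k_subsets: "finite A \<Longrightarrow> finite (k_subsets A k)"
  unfolding k_subsets_def by (rule finite_subset[of _ "Pow A"]) auto

lemma card_k_subsets: "finite A \<Longrightarrow> card (k_subsets A k) = card A choose k"
  unfolding k_subsets_def by (rule n_subsets)

lemma sum_k_subsets_Suc:
  fixes F :: "'a set \<Rightarrow> real"
  assumes A: "finite A"
  shows "Suc k * (\<Sum>T\<in>k_subsets A (Suc k). F T) = (\<Sum>b\<in>A. \<Sum>T\<in>k_subsets (A - {b}) k. F (insert b T))"
proof -
  have "(\<Sum>b\<in>A. \<Sum>T\<in>k_subsets (A - {b}) k. F (insert b T))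
      = (\<Sum>(b, T)\<in>Sigma A (\<lambda>b. k_subsets (A - {b}) k). F (insert b T))"
    using A by (subst sum.Sigma) (auto simp: finite_k_subsets)
  also have "\<dots> = (\<Sum>(T, b)\<in>Sigma (k_subsets A (Suc k)) (\<lambda>T. T). F T)"
  proof (rule sum.reindex_bij_witness[where i="\<lambda>(T, b). (b, T - {b})" and j="\<lambda>(b, T). (insert b T, b)"])
    fix p assume "p \<in> Sigma (k_subsets A (Suc k)) (\<lambda>T. T)"
    then obtain T b where p: "p = (T, b)" and T: "T \<subseteq> A" "card T = Suc k" "b \<in> T"
      by (auto simp: k_subsets_def)
    have "finite T" using T A finite_subset by blast
    with T show "(case case p of (T, b) \<Rightarrow> (b, T - {b}) of (b, T) \<Rightarrow> (insert b T, b)) = p"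
      and "(case p of (T, b) \<Rightarrow> (b, T - {b})) \<in> Sigma A (\<lambda>b. k_subsets (A - {b}) k)"
      by (auto simp: p k_subsets_def)
  next
    fix p assume "p \<in> Sigma A (\<lambda>b. k_subsets (A - {b}) k)"
    then obtain T b where p: "p = (b, T)" and T: "T \<subseteq> A - {b}" "card T = k" "b \<in> A"
      by (auto simp: k_subsets_def)
    have "finite T" using T A finite_subset by blast
    with T show "(case case p of (b, T) \<Rightarrow> (insert b T, b) of (T, b) \<Rightarrow> (b, T - {b})) = p"
      and "(case p of (b, T) \<Rightarrow> (insert b T, b)) \<in> Sigma (k_subsets A (Suc k)) (\<lambda>T. T)"
      by (auto simp: p k_subsets_def card_insert_if)
  qed auto
  also have "\<dots> = (\<Sum>T\<in>k_subsets A (Suc k). \<Sum>b\<in>T. F T)"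
    using A by (subst sum.Sigma) (auto simp: finite_k_subsets k_subsets_def dest: finite_subset)
  also have "\<dots> = (\<Sum>T\<in>k_subsets A (Suc k). Suc k * F T)"
    by (rule sum.cong) (auto simp: k_subsets_def)
  finally show ?thesis by (simp add: sum_distrib_left)
qed

lemma sum_k_subsets_Suc_exp:
  fixes a :: "'a \<Rightarrow> real" and l :: real
  assumes A: "finite A"
  shows "Suc k * (\<Sum>T\<in>k_subsets A (Suc k). exp (l * (\<Sum>i\<in>T. a i)))
           = (\<Sum>b\<in>A. exp (l * a b) * (\<Sum>T\<in>k_subsets (A - {b}) k. exp (l * (\<Sum>i\<in>T. a i))))"
  unfolding sum_k_subsets_Suc[OF A]
proof (rule sum.cong[OF refl])
  fix b assume "b \<in> A"
  have "exp (l * (\<Sum>i\<in>insert b T. a i)) = exp (l * a b) * exp (l * (\<Sum>i\<in>T. a i))"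
    if "T \<in> k_subsets (A - {b}) k" for T
  proof -
    have "b \<notin> T" "finite T" using that A by (auto simp: k_subsets_def dest: finite_subset)
    thus ?thesis by (simp add: distrib_left exp_add)
  qed
  thus "(\<Sum>T\<in>k_subsets (A - {b}) k. exp (l * (\<Sum>i\<in>insert b T. a i)))
      = exp (l * a b) * (\<Sum>T\<in>k_subsets (A - {b}) k. exp (l * (\<Sum>i\<in>T. a i)))"
    by (simp add: sum_distrib_left)
qed

text \<open>
  Induction on k: a uniform (k+1)-subset is a uniform element b together with a uniform k-subset
  of A - {b}.
\<close>

lemma sum_k_subsets_exp_le:
  fixes a :: "'a \<Rightarrow> real" and l :: real
  assumes "finite A" "\<forall>i\<in>A. \<bar>a i\<bar> \<le> 1" "k \<le> card A"
  shows "(\<Sum>T\<in>k_subsets A k. exp (l * (\<Sum>i\<in>T. a i)))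
           \<le> (card A choose k) * exp (l * k * ((\<Sum>i\<in>A. a i) / card A) + l\<^sup>2 * k / 2)"
  using assms
proof (induction k arbitrary: A)
  case 0
  have "k_subsets A 0 = {{}}"
    using 0 by (auto simp: k_subsets_def dest: finite_subset)
  thus ?case by simp
next
  case (Suc k)
  note A = Suc.prems(1,2)
  define N where "N = card A"
  define S where "S = (\<Sum>i\<in>A. a i)"
  have card_remove: "card (A - {b}) = N - 1" and sum_remove: "(\<Sum>i\<in>A - {b}. a i) = S - a b"
    if "b \<in> A" for b
    using that A by (simp_all add: N_def S_def sum_diff1)
  have "Suc k * (\<Sum>T\<in>k_subsets A (Suc k). exp (l * (\<Sum>i\<in>T. a i)))
      = (\<Sum>b\<in>A. exp (l * a b) * (\<Sum>T\<in>k_subsets (A - {b}) k. exp (l * (\<Sum>i\<in>T. a i))))"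
    by (rule sum_k_subsets_Suc_exp[OF A(1)])
  also have "\<dots> \<le> (\<Sum>b\<in>A. exp (l * a b) *
      ((N - 1 choose k) * exp (l * k * ((S - a b) / real (N - 1)) + l\<^sup>2 * k / 2)))"
  proof (intro sum_mono mult_left_mono)
    fix b assume b: "b \<in> A"
    have "(\<Sum>T\<in>k_subsets (A - {b}) k. exp (l * (\<Sum>i\<in>T. a i)))
        \<le> (card (A - {b}) choose k) * exp (l * k * ((\<Sum>i\<in>A - {b}. a i) / card (A - {b})) + l\<^sup>2 * k / 2)"
      using Suc.prems b by (intro Suc.IH) (auto simp: card_remove N_def)
    thus "(\<Sum>T\<in>k_subsets (A - {b}) k. exp (l * (\<Sum>i\<in>T. a i)))
        \<le> (N - 1 choose k) * exp (l * k * ((S - a b) / real (N - 1)) + l\<^sup>2 * k / 2)"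
      by (simp only: card_remove[OF b] sum_remove[OF b])
  qed simp
  also have "\<dots> = (N - 1 choose k) * exp (l\<^sup>2 * k / 2) *
      (\<Sum>b\<in>A. exp (l * a b + l * k * ((S - a b) / real (N - 1))))"
    by (simp add: sum_distrib_left exp_add mult_ac)
  also have "\<dots> \<le> (N - 1 choose k) * exp (l\<^sup>2 * k / 2) *
      (N * exp (l * real (Suc k) * (S / N) + l\<^sup>2 / 2))"
    using sum_exp_leave_one_out_le[OF A, of k l] Suc.prems(3)
    by (intro mult_left_mono) (simp_all add: N_def S_def)
  also have "\<dots> = Suc k * ((N choose Suc k) * exp (l * real (Suc k) * (S / N) + l\<^sup>2 * Suc k / 2))"
  proof -
    have "real N * (N - 1 choose k) = real (Suc k) * (N choose Suc k)"
      by (metis binomial_absorption of_nat_mult)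
    moreover have "exp (l\<^sup>2 * k / 2) * exp (l * real (Suc k) * (S / N) + l\<^sup>2 / 2)
        = exp (l * real (Suc k) * (S / N) + l\<^sup>2 * Suc k / 2)"
      by (simp add: field_simps flip: exp_add)
    ultimately show ?thesis by algebra
  qed
  finally show ?case by (simp add: N_def S_def)
qed

lemma prob_k_subsets_sum_ge:
  fixes a :: "'a \<Rightarrow> real" and t :: real
  assumes A: "finite A" "\<forall>i\<in>A. \<bar>a i\<bar> \<le> 1" and k: "0 < k" "k \<le> card A" and t: "0 \<le> t"
  shows "measure_pmf.prob (pmf_of_set (k_subsets A k))
           {T. (\<Sum>i\<in>T. a i) \<ge> k * ((\<Sum>i\<in>A. a i) / card A) + t} \<le> exp (- t\<^sup>2 / (2 * k))"
proof -
  define K where "K = k_subsets A k"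
  define \<mu> where "\<mu> = (\<Sum>i\<in>A. a i) / card A"
  define l where "l = t / k"
  have card_K: "card K = card A choose k" and "finite K"
    using A by (simp_all add: K_def card_k_subsets finite_k_subsets)
  moreover have "card A choose k > 0" using k by simp
  ultimately have K: "finite K" "K \<noteq> {}" "real (card K) > 0" by auto
  have "real (card (K \<inter> {T. (\<Sum>i\<in>T. a i) \<ge> k * \<mu> + t}))
      = (\<Sum>T\<in>K. if (\<Sum>i\<in>T. a i) \<ge> k * \<mu> + t then 1 else 0)"
    using K by (simp add: sum.If_cases Int_def)
  also have "\<dots> \<le> (\<Sum>T\<in>K. exp (l * ((\<Sum>i\<in>T. a i) - k * \<mu> - t)))"
    using t k by (intro sum_mono) (auto simp: l_def)
  also have "\<dots> = exp (- l * (k * \<mu> + t)) * (\<Sum>T\<in>K. exp (l * (\<Sum>i\<in>T. a i)))"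
  proof -
    have "exp (l * (s - k * \<mu> - t)) = exp (- l * (k * \<mu> + t)) * exp (l * s)" for s
      by (simp add: algebra_simps flip: exp_add)
    thus ?thesis by (simp add: sum_distrib_left)
  qed
  also have "\<dots> \<le> exp (- l * (k * \<mu> + t)) * (card K * exp (l * k * \<mu> + l\<^sup>2 * k / 2))"
    using sum_k_subsets_exp_le[OF A k(2), of l] A(1)
    by (intro mult_left_mono) (simp_all add: K_def card_k_subsets \<mu>_def)
  also have "\<dots> = card K * exp (- t\<^sup>2 / (2 * k))"
  proof -
    have "- l * (k * \<mu> + t) + (l * k * \<mu> + l\<^sup>2 * k / 2) = - t\<^sup>2 / (2 * k)"
      using k by (simp add: l_def field_simps power2_eq_square)
    thus ?thesis by (simp add: mult_ac flip: exp_add)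
  qed
  finally show ?thesis
    using K by (simp add: measure_pmf_of_set K_def[symmetric] \<mu>_def[symmetric] divide_le_eq mult.commute)
qed

definition group_of :: "nat \<Rightarrow> (nat \<Rightarrow> nat) \<Rightarrow> nat \<Rightarrow> nat set" where
  "group_of n g j = {i. i < n \<and> g i = j}"

lemma finite_est_partitions: "finite (est_partitions n d)"
proof -
  have "inj_on (\<lambda>g. restrict g {..<n}) (est_partitions n d)"
  proof (rule inj_onI)
    fix g g' assume g: "g \<in> est_partitions n d" "g' \<in> est_partitions n d"
      and eq: "restrict g {..<n} = restrict g' {..<n}"
    show "g = g'"
    proof
      fix i show "g i = g' i"
        using g fun_cong[OF eq, of i] by (cases "i < n") (auto simp: est_partitions_def)
    qed
  qed
  moreover have "(\<lambda>g. restrict g {..<n}) ` est_partitions n d \<subseteq> PiE {..<n} (\<lambda>_. {..<d})"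
    by (intro image_subsetI PiE_I) (auto simp: est_partitions_def)
  hence "finite ((\<lambda>g. restrict g {..<n}) ` est_partitions n d)"
    by (rule finite_subset) (simp add: finite_PiE)
  ultimately show ?thesis using finite_imageD by blast
qed

lemma est_partitions_nonempty:
  assumes "0 < d" "d dvd n"
  shows "est_partitions n d \<noteq> {}"
proof -
  define k where "k = n div d"
  have n: "n = k * d" using assms by (simp add: k_def)
  define g where "g = (\<lambda>i. if i < n then i div k else 0)"
  have "card {i. i < n \<and> g i = j} = k" if j: "j < d" for j
  proof (cases "k = 0")
    case False
    have "Suc j * k \<le> d * k" using j by (intro mult_le_mono1) simp
    hence block_le: "j * k + k \<le> n" by (simp add: n mult.commute)
    have "x = j \<longleftrightarrow> j \<le> x \<and> \<not> Suc j \<le> x" for x :: nat by linarith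
    hence "i div k = j \<longleftrightarrow> j * k \<le> i \<and> \<not> Suc j * k \<le> i" for i
      using False by (simp add: less_eq_div_iff_mult_less_eq)
    hence "{i. i < n \<and> g i = j} = {j * k..<j * k + k}"
      using block_le by (intro set_eqI) (auto simp: g_def not_le add.commute)
    thus ?thesis by simp
  qed (simp add: n)
  moreover have "g i < d" if "i < n" for i
    using that less_mult_imp_div_less[of i d k] by (simp add: g_def n mult.commute)
  ultimately have "g \<in> est_partitions n d"
    by (auto simp: est_partitions_def g_def k_def)
  thus ?thesis by blast
qed

lemma est_partitions_iff:
  "g \<in> est_partitions n d \<longleftrightarrow>
     (\<forall>i<n. g i < d) \<and> (\<forall>i. n \<le> i \<longrightarrow> g i = 0) \<and> (\<forall>j<d. card (group_of n g j) = n div d)"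
  by (simp add: est_partitions_def group_of_def)

lemma card_group_of:
  "g \<in> est_partitions n d \<Longrightarrow> j < d \<Longrightarrow> card (group_of n g j) = n div d"
  by (simp add: est_partitions_iff)

lemma group_of_in_k_subsets:
  "g \<in> est_partitions n d \<Longrightarrow> j < d \<Longrightarrow> group_of n g j \<in> k_subsets {..<n} (n div d)"
  using card_group_of[of g n d j] by (auto simp: k_subsets_def group_of_def)

lemma exists_permutes_image_eq:
  assumes "finite A" "S \<subseteq> A" "T \<subseteq> A" "card S = card T"
  obtains \<pi> where "\<pi> permutes A" "\<pi> ` S = T"
proof -
  have fin: "finite S" "finite T" using assms finite_subset by auto
  obtain h1 where h1: "bij_betw h1 S T" using finite_same_card_bij[of S T] fin assms(4) by blast
  have "card (A - S) = card (A - T)" using assms fin by (simp add: card_Diff_subset)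
  then obtain h2 where h2: "bij_betw h2 (A - S) (A - T)"
    using finite_same_card_bij[of "A - S" "A - T"] assms(1) by blast
  define \<pi> where "\<pi> = (\<lambda>i. if i \<in> S then h1 i else if i \<in> A then h2 i else i)"
  have b1: "bij_betw \<pi> S T" using h1 by (rule bij_betw_cong[THEN iffD1, rotated]) (simp add: \<pi>_def)
  have b2: "bij_betw \<pi> (A - S) (A - T)" using h2 by (rule bij_betw_cong[THEN iffD1, rotated]) (simp add: \<pi>_def)
  have "bij_betw \<pi> (S \<union> (A - S)) (T \<union> (A - T))"
    by (rule bij_betw_combine[OF b1 b2]) auto
  hence "bij_betw \<pi> A A" using assms by (simp add: Un_absorb1 Un_Diff_cancel)
  hence "\<pi> permutes A" by (rule bij_imp_permutes) (use assms in \<open>auto simp: \<pi>_def\<close>)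
  moreover have "\<pi> ` S = T" using b1 by (simp add: bij_betw_def)
  ultimately show ?thesis using that by blast
qed

lemma group_of_comp_permutes:
  assumes "\<pi> permutes {..<n}"
  shows "group_of n (g \<circ> \<pi>) j = \<pi> -` group_of n g j"
  using permutes_in_image[OF assms] by (auto simp: group_of_def)

lemma comp_permutes_in_est_partitions:
  assumes g: "g \<in> est_partitions n d" and \<pi>: "\<pi> permutes {..<n}"
  shows "g \<circ> \<pi> \<in> est_partitions n d"
proof -
  have "card (group_of n (g \<circ> \<pi>) j) = card (group_of n g j)" for j
    using \<pi> by (simp add: group_of_comp_permutes card_vimage_inj permutes_inj permutes_surj)
  thus ?thesis
    using g permutes_in_image[OF \<pi>] permutes_not_in[OF \<pi>] by (auto simp: est_partitions_iff)
qed

lemma card_est_partitions_group_of_eq: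
  assumes "S \<in> k_subsets {..<n} k" "T \<in> k_subsets {..<n} k"
  shows "card {g \<in> est_partitions n d. group_of n g j = S} = card {g \<in> est_partitions n d. group_of n g j = T}"
proof -
  have "S \<subseteq> {..<n}" "T \<subseteq> {..<n}" "card S = card T" using assms by (auto simp: k_subsets_def)
  then obtain \<pi> where \<pi>: "\<pi> permutes {..<n}" "\<pi> ` S = T"
    using exists_permutes_image_eq[OF finite_lessThan] by metis
  have \<pi>': "inv \<pi> permutes {..<n}" using \<pi>(1) by (rule permutes_inv)
  have pre_T: "\<pi> -` T = S" using \<pi> by (simp add: permutes_inj inj_vimage_image_eq flip: \<pi>(2))
  have pre_S: "inv \<pi> -` S = T"
    using \<pi> \<pi>' by (simp add: bij_vimage_eq_inv_image permutes_bij inv_inv_eq)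
  have "bij_betw (\<lambda>g. g \<circ> \<pi>) {g \<in> est_partitions n d. group_of n g j = T}
                                {g \<in> est_partitions n d. group_of n g j = S}"
  proof (rule bij_betw_byWitness[where f'="\<lambda>g. g \<circ> inv \<pi>"])
    show "(\<lambda>g. g \<circ> \<pi>) ` {g \<in> est_partitions n d. group_of n g j = T}
            \<subseteq> {g \<in> est_partitions n d. group_of n g j = S}"
      using comp_permutes_in_est_partitions[OF _ \<pi>(1)] group_of_comp_permutes[OF \<pi>(1)] pre_T
      by blast
    show "(\<lambda>g. g \<circ> inv \<pi>) ` {g \<in> est_partitions n d. group_of n g j = S}
            \<subseteq> {g \<in> est_partitions n d. group_of n g j = T}"
      using comp_permutes_in_est_partitions[OF _ \<pi>'] group_of_comp_permutes[OF \<pi>'] pre_S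
      by blast
  qed (simp_all add: comp_assoc permutes_inv_o[OF \<pi>(1)])
  thus ?thesis by (simp add: bij_betw_same_card)
qed

lemma map_pmf_group_of_est_partitions:
  assumes d: "0 < d" "d dvd n" and j: "j < d"
  shows "map_pmf (\<lambda>g. group_of n g j) (pmf_of_set (est_partitions n d))
           = pmf_of_set (k_subsets {..<n} (n div d))"
proof -
  define P where "P = est_partitions n d"
  define K where "K = k_subsets {..<n} (n div d)"
  define fib where "fib T = {g \<in> P. group_of n g j = T}" for T
  have P: "finite P" "P \<noteq> {}" using finite_est_partitions est_partitions_nonempty[OF d] by (simp_all add: P_def)
  have K: "finite K" by (simp add: K_def finite_k_subsets)
  have group_in_K: "group_of n g j \<in> K" if "g \<in> P" for g
    using that j by (simp add: P_def K_def group_of_in_k_subsets)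
  obtain g0 where g0: "g0 \<in> P" using P by auto
  define c where "c = card (fib (group_of n g0 j))"
  have fib_c: "card (fib T) = c" if "T \<in> K" for T
    unfolding c_def fib_def P_def
    using that group_in_K[OF g0] by (intro card_est_partitions_group_of_eq) (auto simp: K_def)
  have "P = (\<Union>T\<in>K. fib T)" using group_in_K by (auto simp: fib_def)
  also have "card \<dots> = (\<Sum>T\<in>K. card (fib T))"
    using K P by (intro card_UN_disjoint) (auto simp: fib_def)
  also have "\<dots> = card K * c" by (simp add: fib_c)
  finally have card_P: "card P = card K * c" .
  show ?thesis
  proof (rule pmf_eqI)
    fix T
    have "pmf (map_pmf (\<lambda>g. group_of n g j) (pmf_of_set P)) T = card (fib T) / card P"
      using P by (simp add: pmf_map measure_pmf_of_set fib_def Int_def conj_commute)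
    also have "\<dots> = indicator K T / card K"
    proof (cases "T \<in> K")
      case False
      hence "fib T = {}" using group_in_K by (auto simp: fib_def)
      thus ?thesis using False by simp
    next
      case True
      have "c > 0" using card_P P by (metis card_0_eq gr0I mult_0_right)
      thus ?thesis using True by (simp add: fib_c card_P)
    qed
    also have "\<dots> = pmf (pmf_of_set K) T"
      using K group_in_K[OF g0] by (subst pmf_of_set) auto
    finally show "pmf (map_pmf (\<lambda>g. group_of n g j) (pmf_of_set (est_partitions n d))) T
                    = pmf (pmf_of_set (k_subsets {..<n} (n div d))) T"
      by (simp only: P_def K_def)
  qed
qed

lemma prob_est_partitions_group_sum_ge:
  fixes a :: "nat \<Rightarrow> real" and t :: real
  assumes d: "0 < d" "d dvd n" "j < d" and n: "0 < n" and a: "\<forall>i<n. \<bar>a i\<bar> \<le> 1" and t: "0 \<le> t"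
  shows "measure_pmf.prob (pmf_of_set (est_partitions n d))
           {g. (\<Sum>i\<in>group_of n g j. a i) \<ge> real (n div d) * ((\<Sum>i<n. a i) / n) + t}
         \<le> exp (- t\<^sup>2 / (2 * real (n div d)))"
proof -
  have k: "0 < n div d" "n div d \<le> card {..<n}"
    using d n by (auto elim!: dvdE)
  have "measure_pmf.prob (pmf_of_set (est_partitions n d))
           {g. (\<Sum>i\<in>group_of n g j. a i) \<ge> real (n div d) * ((\<Sum>i<n. a i) / n) + t}
      = measure_pmf.prob (map_pmf (\<lambda>g. group_of n g j) (pmf_of_set (est_partitions n d)))
           {T. (\<Sum>i\<in>T. a i) \<ge> real (n div d) * ((\<Sum>i<n. a i) / card {..<n}) + t}"
    by simp
  also have "\<dots> \<le> exp (- t\<^sup>2 / (2 * real (n div d)))"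
    unfolding map_pmf_group_of_est_partitions[OF d]
    by (rule prob_k_subsets_sum_ge) (use a k t in auto)
  finally show ?thesis .
qed

lemma prob_est_partitions_group_sum_deviation:
  fixes a :: "nat \<Rightarrow> real" and t :: real
  assumes "0 < d" "d dvd n" "j < d" "0 < n" and a: "\<forall>i<n. \<bar>a i\<bar> \<le> 1" and "0 \<le> t"
  shows "measure_pmf.prob (pmf_of_set (est_partitions n d))
           {g. \<bar>(\<Sum>i\<in>group_of n g j. a i) - real (n div d) * ((\<Sum>i<n. a i) / n)\<bar> \<ge> t}
         \<le> 2 * exp (- t\<^sup>2 / (2 * real (n div d)))"
proof -
  let ?P = "pmf_of_set (est_partitions n d)"
  let ?upper = "\<lambda>a. {g. (\<Sum>i\<in>group_of n g j. a i) \<ge> real (n div d) * ((\<Sum>i<n. a i) / n) + t}"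
  have "{g. \<bar>(\<Sum>i\<in>group_of n g j. a i) - real (n div d) * ((\<Sum>i<n. a i) / n)\<bar> \<ge> t}
      \<subseteq> ?upper a \<union> ?upper (\<lambda>i. - a i)"
    by (auto simp: sum_negf abs_le_iff)
  hence "measure_pmf.prob ?P {g. \<bar>(\<Sum>i\<in>group_of n g j. a i) - real (n div d) * ((\<Sum>i<n. a i) / n)\<bar> \<ge> t}
      \<le> measure_pmf.prob ?P (?upper a) + measure_pmf.prob ?P (?upper (\<lambda>i. - a i))"
    by (intro order.trans[OF measure_pmf.finite_measure_mono measure_Un_le]) auto
  also have "\<dots> \<le> exp (- t\<^sup>2 / (2 * real (n div d))) + exp (- t\<^sup>2 / (2 * real (n div d)))"
    by (intro add_mono prob_est_partitions_group_sum_ge) (use assms in auto)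
  finally show ?thesis by simp
qed

lemma rr_scale_ge_1: "0 < \<epsilon> \<Longrightarrow> 1 \<le> rr_scale \<epsilon>"
  unfolding rr_scale_def by (simp add: divide_simps)

lemma set_pmf_RR: "set_pmf (RR \<epsilon> b) \<subseteq> {b * rr_scale \<epsilon>, - b * rr_scale \<epsilon>}"
  unfolding RR_def by auto

lemma set_pmf_est_randomizer: "set_pmf (est_randomizer \<epsilon> v) \<subseteq> {rr_scale \<epsilon>, - rr_scale \<epsilon>}"
  unfolding est_randomizer_def using set_pmf_RR by (fastforce simp: set_bind_pmf)

lemma expectation_RR:
  assumes "0 < \<epsilon>"
  shows "measure_pmf.expectation (RR \<epsilon> b) (\<lambda>y. y) = b"
proof -
  define e where "e = exp \<epsilon>"
  have e: "1 < e" using assms by (simp add: e_def)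
  hence "0 \<le> e / (e + 1)" "e / (e + 1) \<le> 1" by simp_all
  hence "measure_pmf.expectation (RR \<epsilon> b) (\<lambda>y. y)
      = b * rr_scale \<epsilon> * (e / (e + 1)) + (- b * rr_scale \<epsilon>) * (1 - e / (e + 1))"
    by (simp add: RR_def integral_bernoulli_pmf e_def)
  also have "\<dots> = b * (rr_scale \<epsilon> * (2 * (e / (e + 1)) - 1))"
    by (simp add: algebra_simps)
  also have "2 * (e / (e + 1)) - 1 = (e - 1) / (e + 1)"
    using e by (simp add: field_simps)
  also have "rr_scale \<epsilon> * ((e - 1) / (e + 1)) = 1"
    using e by (simp add: rr_scale_def e_def[symmetric])
  finally show ?thesis by simp
qed

lemma expectation_est_randomizer:
  assumes "0 < \<epsilon>" "\<bar>v\<bar> \<le> 1"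
  shows "measure_pmf.expectation (est_randomizer \<epsilon> v) (\<lambda>y. y) = v"
proof -
  have "finite (set_pmf (RR \<epsilon> b))" for b by (rule finite_subset[OF set_pmf_RR]) auto
  hence "measure_pmf.expectation (est_randomizer \<epsilon> v) (\<lambda>y. y) =
      (\<Sum>b\<in>UNIV. pmf (bernoulli_pmf (1/2 + v/2)) b *\<^sub>R measure_pmf.expectation (RR \<epsilon> (if b then 1 else -1)) (\<lambda>y. y))"
    unfolding est_randomizer_def by (intro pmf_expectation_bind) auto
  also have "\<dots> = v" using assms by (simp add: UNIV_bool expectation_RR abs_le_iff)
  finally show ?thesis .
qed

lemma prob_Pi_pmf_sum_deviation_ge:
  fixes Q :: "'a \<Rightarrow> real pmf" and r t :: real
  assumes A: "finite A" and I: "I \<subseteq> A" "I \<noteq> {}"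
    and Q: "\<forall>i\<in>I. set_pmf (Q i) \<subseteq> {-r..r}" "\<forall>i\<in>I. measure_pmf.expectation (Q i) (\<lambda>v. v) = \<mu> i"
    and t: "0 \<le> t" and r: "0 < r"
  shows "measure_pmf.prob (Pi_pmf A dflt Q) {y. \<bar>(\<Sum>i\<in>I. y i) - (\<Sum>i\<in>I. \<mu> i)\<bar> \<ge> t}
           \<le> 2 * exp (- t\<^sup>2 / (2 * real (card I) * r\<^sup>2))"
proof -
  let ?Y = "measure_pmf (Pi_pmf A dflt Q)"
  have fin: "finite I" using A I finite_subset by blast
  have "prob_space.indep_vars ?Y (\<lambda>_. count_space UNIV) (\<lambda>i y. y i) I"
    by (rule prob_space.indep_vars_subset[OF measure_pmf.prob_space_axioms indep_vars_Pi_pmf[OF A] I(1)])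
  from prob_space.indep_vars_compose2[OF measure_pmf.prob_space_axioms this, of "\<lambda>_ v. v" "\<lambda>_. borel"]
  have indep: "prob_space.indep_vars ?Y (\<lambda>_. borel) (\<lambda>i y. y i) I"
    by simp
  have E: "measure_pmf.expectation (Pi_pmf A dflt Q) (\<lambda>y. y i) = \<mu> i" if "i \<in> I" for i
  proof -
    have "measure_pmf.expectation (Pi_pmf A dflt Q) (\<lambda>y. y i)
        = measure_pmf.expectation (map_pmf (\<lambda>y. y i) (Pi_pmf A dflt Q)) (\<lambda>v. v)"
      by simp
    also have "\<dots> = \<mu> i" using that I Q by (subst Pi_pmf_component[OF A]) auto
    finally show ?thesis .
  qed
  interpret Hoeffding_ineq ?Y I "\<lambda>i y. y i" "\<lambda>_. -r" "\<lambda>_. r" "\<Sum>i\<in>I. \<mu> i"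
  proof unfold_locales
    fix i assume i: "i \<in> I"
    show "AE y in ?Y. y i \<in> {-r..r}"
    proof (rule AE_pmfI)
      fix y assume "y \<in> set_pmf (Pi_pmf A dflt Q)"
      hence "y i \<in> set_pmf (Q i)" using i I A by (auto simp: set_Pi_pmf PiE_dflt_def)
      thus "y i \<in> {-r..r}" using Q(1) i by blast
    qed
  qed (use fin indep E in auto)
  have "2 * t\<^sup>2 / (\<Sum>i\<in>I. (r - - r)\<^sup>2) = t\<^sup>2 / (2 * real (card I) * r\<^sup>2)"
    by (simp add: power2_eq_square field_simps)
  thus ?thesis using Hoeffding_ineq_abs_ge[OF t] fin I r by (simp add: card_gt_0_iff mult.assoc)
qed

definition manip_messages ::
  "nat \<Rightarrow> real \<Rightarrow> (nat \<Rightarrow> nat \<Rightarrow> real) \<Rightarrow> nat set \<Rightarrow> ((nat \<Rightarrow> nat) \<Rightarrow> nat \<Rightarrow> real) \<Rightarrow> (nat \<Rightarrow> nat)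
     \<Rightarrow> (nat \<Rightarrow> real) pmf" where
  "manip_messages n \<epsilon> x C f g =
     Pi_pmf {..<n} 0 (\<lambda>i. if i \<in> C then return_pmf (f g i) else est_randomizer \<epsilon> (x i (g i)))"

definition est_aggregate :: "nat \<Rightarrow> nat \<Rightarrow> (nat \<Rightarrow> nat) \<Rightarrow> (nat \<Rightarrow> real) \<Rightarrow> nat \<Rightarrow> real" where
  "est_aggregate n d g y j = (if j < d then real d / real n * (\<Sum>i\<in>group_of n g j. y i) else 0)"

text \<open>Obliviousness: the attacker's draw does not depend on the partition, so the two draws commute.\<close>

lemma manip_est_eq_bind:
  "manip_est n d \<epsilon> x M = M \<bind> (\<lambda>(C, f).
     pmf_of_set (est_partitions n d) \<bind> (\<lambda>g. map_pmf (est_aggregate n d g) (manip_messages n \<epsilon> x C f g)))"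
  unfolding manip_est_def manip_messages_def est_aggregate_def group_of_def map_pmf_def
  by (subst bind_commute_pmf) (simp add: case_prod_unfold fun_eq_iff)

lemma prob_bind_pmf_le_add:
  assumes "measure_pmf.prob p B \<le> a"
    and "\<And>x. x \<in> set_pmf p \<Longrightarrow> x \<notin> B \<Longrightarrow> measure_pmf.prob (f x) A \<le> b" and "0 \<le> b"
  shows "measure_pmf.prob (p \<bind> f) A \<le> a + b"
proof -
  have "emeasure (f x) A \<le> indicator B x + ennreal b" if "x \<in> set_pmf p" for x
  proof (cases "x \<in> B")
    case True
    have "emeasure (f x) A \<le> 1" by (rule measure_pmf.emeasure_le_1)
    thus ?thesis using True by (simp add: add_increasing2)
  next
    case False
    thus ?thesis using assms(2)[OF that] by (simp add: measure_pmf.emeasure_eq_measure ennreal_leI)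
  qed
  hence "emeasure (measure_pmf (p \<bind> f)) A \<le> (\<integral>\<^sup>+x. indicator B x + ennreal b \<partial>p)"
    by (simp add: nn_integral_mono_AE AE_pmfI)
  also have "\<dots> = emeasure p B + ennreal b"
    by (simp add: nn_integral_add measure_pmf.emeasure_space_1)
  also have "\<dots> \<le> ennreal (a + b)"
    using assms(1,3) measure_pmf.emeasure_eq_measure[of p B]
    by (simp add: ennreal_leI del: ennreal_plus flip: ennreal_plus)
  finally have "ennreal (measure_pmf.prob (p \<bind> f) A) \<le> ennreal (a + b)"
    by (simp add: measure_pmf.emeasure_eq_measure)
  moreover have "0 \<le> a + b" using assms(1,3) measure_nonneg[of p B] by linarith
  ultimately show ?thesis by (simp add: ennreal_le_iff)
qed

lemma abs_sum_diff_le_corrupted: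
  fixes \<mu> w :: "'a \<Rightarrow> real"
  assumes "finite G" "\<forall>i\<in>G - H. \<mu> i = w i" "\<forall>i\<in>G \<inter> H. \<bar>\<mu> i - w i\<bar> \<le> c"
  shows "\<bar>(\<Sum>i\<in>G. \<mu> i) - (\<Sum>i\<in>G. w i)\<bar> \<le> c * card (G \<inter> H)"
proof -
  have "(\<Sum>i\<in>G. \<mu> i) - (\<Sum>i\<in>G. w i) = (\<Sum>i\<in>G. if i \<in> H then \<mu> i - w i else 0)"
    using assms(2) by (simp add: sum_subtractf[symmetric]) (intro sum.cong, auto)
  also have "\<dots> = (\<Sum>i\<in>G \<inter> H. \<mu> i - w i)"
    using assms(1) by (simp add: sum.inter_restrict)
  also have "\<bar>\<dots>\<bar> \<le> (\<Sum>i\<in>G \<inter> H. c)"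
    using assms(3) by (intro order.trans[OF sum_abs] sum_mono) auto
  finally show ?thesis by (simp add: mult.commute)
qed

definition typical_partition ::
  "nat \<Rightarrow> nat \<Rightarrow> real \<Rightarrow> (nat \<Rightarrow> nat \<Rightarrow> real) \<Rightarrow> nat set \<Rightarrow> (nat \<Rightarrow> nat) \<Rightarrow> bool" where
  "typical_partition n d t x C g \<longleftrightarrow> (\<forall>j<d.
     real (card (group_of n g j \<inter> C)) < real (n div d) * (real (card C) / n) + t \<and>
     \<bar>(\<Sum>i\<in>group_of n g j. x i j) - real (n div d) * ((\<Sum>i<n. x i j) / n)\<bar> < t)"

lemma prob_not_typical_partition:
  fixes t :: real
  assumes d: "0 < d" "d dvd n" and n: "0 < n" and x: "\<forall>i<n. \<forall>j<d. \<bar>x i j\<bar> \<le> 1"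
    and C: "C \<subseteq> {..<n}" and t: "0 \<le> t"
  shows "measure_pmf.prob (pmf_of_set (est_partitions n d)) {g. \<not> typical_partition n d t x C g}
           \<le> 3 * real d * exp (- t\<^sup>2 / (2 * real (n div d)))"
proof -
  let ?P = "pmf_of_set (est_partitions n d)" and ?E = "exp (- t\<^sup>2 / (2 * real (n div d)))"
  define crowded where "crowded j = {g. (\<Sum>i\<in>group_of n g j. of_bool (i \<in> C))
      \<ge> real (n div d) * ((\<Sum>i<n. of_bool (i \<in> C)) / n) + t}" for j
  define skewed where "skewed j = {g. \<bar>(\<Sum>i\<in>group_of n g j. x i j)
      - real (n div d) * ((\<Sum>i<n. x i j) / n)\<bar> \<ge> t}" for j
  have "(\<Sum>i\<in>group_of n g j. of_bool (i \<in> C)) = real (card (group_of n g j \<inter> C))" for g j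
    by (simp add: group_of_def)
  moreover have "(\<Sum>i<n. of_bool (i \<in> C)) = real (card C)"
    using C by (simp add: Int_absorb1)
  ultimately have "{g. \<not> typical_partition n d t x C g} \<subseteq> (\<Union>j<d. crowded j \<union> skewed j)"
    by (auto simp: typical_partition_def crowded_def skewed_def not_less)
  hence "measure_pmf.prob ?P {g. \<not> typical_partition n d t x C g}
      \<le> (\<Sum>j<d. measure_pmf.prob ?P (crowded j \<union> skewed j))"
    by (intro order.trans[OF measure_pmf.finite_measure_mono measure_pmf.finite_measure_subadditive_finite])
       auto
  also have "\<dots> \<le> (\<Sum>j<d. measure_pmf.prob ?P (crowded j) + measure_pmf.prob ?P (skewed j))"
    by (intro sum_mono measure_Un_le) auto
  also have "\<dots> \<le> (\<Sum>j<d. ?E + 2 * ?E)"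
  proof (intro sum_mono add_mono)
    fix j assume "j \<in> {..<d}"
    hence j: "j < d" by simp
    show "measure_pmf.prob ?P (crowded j) \<le> ?E"
      unfolding crowded_def by (rule prob_est_partitions_group_sum_ge) (use d j n t in auto)
    show "measure_pmf.prob ?P (skewed j) \<le> 2 * ?E"
      unfolding skewed_def by (rule prob_est_partitions_group_sum_deviation) (use d j n x t in auto)
  qed
  finally show ?thesis by simp
qed

lemma prob_manip_messages_group_deviation:
  fixes t :: real
  assumes \<epsilon>: "0 < \<epsilon>" and x: "\<forall>i<n. \<forall>j<d. \<bar>x i j\<bar> \<le> 1"
    and g: "g \<in> est_partitions n d" and j: "j < d" and k: "0 < n div d"
    and f: "\<forall>i\<in>C. f g i \<in> {rr_scale \<epsilon>, - rr_scale \<epsilon>}" and t: "0 \<le> t"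
  shows "measure_pmf.prob (manip_messages n \<epsilon> x C f g)
           {y. \<bar>(\<Sum>i\<in>group_of n g j. y i) - (\<Sum>i\<in>group_of n g j. if i \<in> C then f g i else x i j)\<bar>
               \<ge> rr_scale \<epsilon> * t}
         \<le> 2 * exp (- t\<^sup>2 / (2 * real (n div d)))"
proof -
  let ?G = "group_of n g j" and ?r = "rr_scale \<epsilon>"
  let ?Q = "\<lambda>i. if i \<in> C then return_pmf (f g i) else est_randomizer \<epsilon> (x i (g i))"
  have r: "0 < ?r" using rr_scale_ge_1[OF \<epsilon>] by linarith
  have G: "?G \<subseteq> {..<n}" "card ?G = n div d" using card_group_of[OF g j] by (auto simp: group_of_def)
  hence "?G \<noteq> {}" using k by auto
  have exponent: "- (?r * t)\<^sup>2 / (2 * real (card ?G) * ?r\<^sup>2) = - t\<^sup>2 / (2 * real (n div d))"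
    using r by (simp add: G power_mult_distrib)
  have "measure_pmf.prob (Pi_pmf {..<n} 0 ?Q)
      {y. \<bar>(\<Sum>i\<in>?G. y i) - (\<Sum>i\<in>?G. if i \<in> C then f g i else x i j)\<bar> \<ge> ?r * t}
      \<le> 2 * exp (- (?r * t)\<^sup>2 / (2 * real (card ?G) * ?r\<^sup>2))"
  proof (rule prob_Pi_pmf_sum_deviation_ge)
    have "set_pmf (?Q i) \<subseteq> {?r, - ?r}" for i
      using f set_pmf_est_randomizer[of \<epsilon> "x i (g i)"] by (cases "i \<in> C") auto
    thus "\<forall>i\<in>?G. set_pmf (?Q i) \<subseteq> {- ?r..?r}" using r by fastforce
    show "\<forall>i\<in>?G. measure_pmf.expectation (?Q i) (\<lambda>v. v) = (if i \<in> C then f g i else x i j)"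
      using x j expectation_est_randomizer[OF \<epsilon>] by (auto simp: group_of_def)
  qed (use G \<open>?G \<noteq> {}\<close> t r in auto)
  thus ?thesis unfolding exponent manip_messages_def .
qed

lemma est_aggregate_error_lt:
  fixes r t :: real and y :: "nat \<Rightarrow> real"
  assumes d: "0 < d" "d dvd n" and n: "0 < n" and j: "j < d" and r: "1 \<le> r" and t: "0 \<le> t"
    and x: "\<forall>i<n. \<bar>x i j\<bar> \<le> 1" and f: "\<forall>i\<in>C. \<bar>f i\<bar> = r"
    and typical: "typical_partition n d t x C g"
    and close: "\<bar>(\<Sum>i\<in>group_of n g j. y i) - (\<Sum>i\<in>group_of n g j. if i \<in> C then f i else x i j)\<bar> < r * t"
  shows "\<bar>est_aggregate n d g y j - 1 / real n * (\<Sum>i<n. x i j)\<bar>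
           < r * (4 * (real d / real n) * t + 2 * (real (card C) / real n))"
proof -
  let ?G = "group_of n g j" and ?k = "real (n div d)"
  let ?W = "?k * ((\<Sum>i<n. x i j) / real n)"
  have scale: "real d / real n * (?k * z) = z" for z
    using d n by (auto elim!: dvdE)
  have corrupted: "\<bar>(\<Sum>i\<in>?G. if i \<in> C then f i else x i j) - (\<Sum>i\<in>?G. x i j)\<bar>
      \<le> 2 * r * card (?G \<inter> C)"
  proof (rule abs_sum_diff_le_corrupted)
    show "\<forall>i\<in>?G \<inter> C. \<bar>(if i \<in> C then f i else x i j) - x i j\<bar> \<le> 2 * r"
    proof
      fix i assume i: "i \<in> ?G \<inter> C"
      hence "\<bar>f i\<bar> = r" "\<bar>x i j\<bar> \<le> 1" using f x by (auto simp: group_of_def)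
      thus "\<bar>(if i \<in> C then f i else x i j) - x i j\<bar> \<le> 2 * r" using i r by simp
    qed
  qed (simp_all add: group_of_def)
  have few: "real (card (?G \<inter> C)) < ?k * (real (card C) / n) + t"
    and sampled: "\<bar>(\<Sum>i\<in>?G. x i j) - ?W\<bar> < t"
    using typical j by (auto simp: typical_partition_def)
  have "2 * r * card (?G \<inter> C) \<le> 2 * r * (?k * (real (card C) / n) + t)"
    using few r by (intro mult_left_mono) auto
  hence "\<bar>(\<Sum>i\<in>?G. y i) - ?W\<bar> < r * t + 2 * r * (?k * (real (card C) / n) + t) + t"
    using close corrupted sampled by linarith
  also have "\<dots> \<le> r * (4 * t + 2 * (?k * (real (card C) / n)))"
    using mult_right_mono[OF r t] by (simp add: algebra_simps)
  finally have group_error: "\<bar>(\<Sum>i\<in>?G. y i) - ?W\<bar> < r * (4 * t + 2 * (?k * (real (card C) / n)))" .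
  have "est_aggregate n d g y j - 1 / real n * (\<Sum>i<n. x i j) = real d / real n * ((\<Sum>i\<in>?G. y i) - ?W)"
    by (simp only: est_aggregate_def if_P[OF j] right_diff_distrib scale) simp
  hence "\<bar>est_aggregate n d g y j - 1 / real n * (\<Sum>i<n. x i j)\<bar> = real d / real n * \<bar>(\<Sum>i\<in>?G. y i) - ?W\<bar>"
    by (simp add: abs_mult)
  also have "\<dots> < real d / real n * (r * (4 * t + 2 * (?k * (real (card C) / n))))"
    using group_error d n by (intro mult_strict_left_mono) auto
  also have "\<dots> = r * (4 * (real d / real n) * t + 2 * (real d / real n * (?k * (real (card C) / n))))"
    by (simp add: algebra_simps)
  finally show ?thesis by (simp only: scale)
qed

lemma prob_est_aggregate_error_ge:
  fixes t :: real
  assumes \<epsilon>: "0 < \<epsilon>" and d: "0 < d" "d dvd n" and n: "0 < n" and x: "\<forall>i<n. \<forall>j<d. \<bar>x i j\<bar> \<le> 1"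
    and g: "g \<in> est_partitions n d" and f: "\<forall>i\<in>C. f g i \<in> {rr_scale \<epsilon>, - rr_scale \<epsilon>}"
    and typical: "typical_partition n d t x C g" and t: "0 \<le> t"
  shows "measure_pmf.prob (manip_messages n \<epsilon> x C f g)
           {y. \<exists>j<d. \<bar>est_aggregate n d g y j - 1 / real n * (\<Sum>i<n. x i j)\<bar>
                 \<ge> rr_scale \<epsilon> * (4 * (real d / real n) * t + 2 * (real (card C) / real n))}
         \<le> 2 * real d * exp (- t\<^sup>2 / (2 * real (n div d)))"
proof -
  let ?Y = "manip_messages n \<epsilon> x C f g" and ?r = "rr_scale \<epsilon>"
  define dev where "dev j = {y. \<bar>(\<Sum>i\<in>group_of n g j. y i)
      - (\<Sum>i\<in>group_of n g j. if i \<in> C then f g i else x i j)\<bar> \<ge> ?r * t}" for j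
  have r: "1 \<le> ?r" using rr_scale_ge_1[OF \<epsilon>] .
  hence f': "\<forall>i\<in>C. \<bar>f g i\<bar> = ?r" using f by auto
  have "{y. \<exists>j<d. \<bar>est_aggregate n d g y j - 1 / real n * (\<Sum>i<n. x i j)\<bar>
              \<ge> ?r * (4 * (real d / real n) * t + 2 * (real (card C) / real n))} \<subseteq> (\<Union>j<d. dev j)"
  proof
    fix y assume "y \<in> {y. \<exists>j<d. \<bar>est_aggregate n d g y j - 1 / real n * (\<Sum>i<n. x i j)\<bar>
        \<ge> ?r * (4 * (real d / real n) * t + 2 * (real (card C) / real n))}"
    then obtain j where j: "j < d" and far: "\<bar>est_aggregate n d g y j - 1 / real n * (\<Sum>i<n. x i j)\<bar>
        \<ge> ?r * (4 * (real d / real n) * t + 2 * (real (card C) / real n))" by blast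
    have "y \<in> dev j"
    proof (rule ccontr)
      assume "y \<notin> dev j"
      hence "\<bar>(\<Sum>i\<in>group_of n g j. y i) - (\<Sum>i\<in>group_of n g j. if i \<in> C then f g i else x i j)\<bar> < ?r * t"
        by (simp add: dev_def not_le)
      hence "\<bar>est_aggregate n d g y j - 1 / real n * (\<Sum>i<n. x i j)\<bar>
          < ?r * (4 * (real d / real n) * t + 2 * (real (card C) / real n))"
        using x j by (intro est_aggregate_error_lt[OF d n j r t _ f' typical]) auto
      with far show False by simp
    qed
    thus "y \<in> (\<Union>j<d. dev j)" using j by blast
  qed
  hence "measure_pmf.prob ?Y {y. \<exists>j<d. \<bar>est_aggregate n d g y j - 1 / real n * (\<Sum>i<n. x i j)\<bar>
              \<ge> ?r * (4 * (real d / real n) * t + 2 * (real (card C) / real n))}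
      \<le> (\<Sum>j<d. measure_pmf.prob ?Y (dev j))"
    by (intro order.trans[OF measure_pmf.finite_measure_mono measure_pmf.finite_measure_subadditive_finite])
       auto
  also have "\<dots> \<le> (\<Sum>j<d. 2 * exp (- t\<^sup>2 / (2 * real (n div d))))"
  proof (rule sum_mono)
    fix j assume "j \<in> {..<d}"
    moreover have "0 < n div d" using d n by (auto elim!: dvdE)
    ultimately show "measure_pmf.prob ?Y (dev j) \<le> 2 * exp (- t\<^sup>2 / (2 * real (n div d)))"
      unfolding dev_def using \<epsilon> x g f t by (intro prob_manip_messages_group_deviation) auto
  qed
  finally show ?thesis by simp
qed

lemma prob_manip_attack_error_ge:
  fixes t :: real
  assumes \<epsilon>: "0 < \<epsilon>" and d: "0 < d" "d dvd n" and n: "0 < n" and x: "\<forall>i<n. \<forall>j<d. \<bar>x i j\<bar> \<le> 1"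
    and C: "C \<subseteq> {..<n}" and f: "\<forall>S. \<forall>i\<in>C. f S i \<in> {rr_scale \<epsilon>, - rr_scale \<epsilon>}" and t: "0 \<le> t"
  shows "measure_pmf.prob (pmf_of_set (est_partitions n d) \<bind>
             (\<lambda>g. map_pmf (est_aggregate n d g) (manip_messages n \<epsilon> x C f g)))
           {z. \<exists>j<d. \<bar>z j - 1 / real n * (\<Sum>i<n. x i j)\<bar>
                 \<ge> rr_scale \<epsilon> * (4 * (real d / real n) * t + 2 * (real (card C) / real n))}
         \<le> 5 * real d * exp (- t\<^sup>2 / (2 * real (n div d)))"
proof -
  let ?E = "exp (- t\<^sup>2 / (2 * real (n div d)))"
  have "measure_pmf.prob (pmf_of_set (est_partitions n d) \<bind>
             (\<lambda>g. map_pmf (est_aggregate n d g) (manip_messages n \<epsilon> x C f g)))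
           {z. \<exists>j<d. \<bar>z j - 1 / real n * (\<Sum>i<n. x i j)\<bar>
                 \<ge> rr_scale \<epsilon> * (4 * (real d / real n) * t + 2 * (real (card C) / real n))}
         \<le> 3 * real d * ?E + 2 * real d * ?E"
  proof (rule prob_bind_pmf_le_add)
    show "measure_pmf.prob (pmf_of_set (est_partitions n d)) {g. \<not> typical_partition n d t x C g} \<le> 3 * real d * ?E"
      by (rule prob_not_typical_partition[OF d n x C t])
  next
    fix g assume "g \<in> set_pmf (pmf_of_set (est_partitions n d))"
      and "g \<notin> {g. \<not> typical_partition n d t x C g}"
    hence "g \<in> est_partitions n d" "typical_partition n d t x C g"
      using finite_est_partitions est_partitions_nonempty[OF d] by auto
    thus "measure_pmf.prob (map_pmf (est_aggregate n d g) (manip_messages n \<epsilon> x C f g))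
           {z. \<exists>j<d. \<bar>z j - 1 / real n * (\<Sum>i<n. x i j)\<bar>
                 \<ge> rr_scale \<epsilon> * (4 * (real d / real n) * t + 2 * (real (card C) / real n))}
          \<le> 2 * real d * ?E"
      using prob_est_aggregate_error_ge[OF \<epsilon> d n x _ _ _ t] f by simp
  qed simp
  thus ?thesis by simp
qed

lemma prob_manip_est_error_ge:
  fixes t :: real
  assumes \<epsilon>: "0 < \<epsilon>" and d: "0 < d" "d dvd n" and n: "0 < n" and x: "\<forall>i<n. \<forall>j<d. \<bar>x i j\<bar> \<le> 1"
    and M: "valid_attacker \<epsilon> m n M" and t: "0 \<le> t"
  shows "measure_pmf.prob (manip_est n d \<epsilon> x M)
           {z. \<exists>j<d. \<bar>z j - 1 / real n * (\<Sum>i<n. x i j)\<bar>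
                 \<ge> rr_scale \<epsilon> * (4 * (real d / real n) * t + 2 * (real m / real n))}
         \<le> 5 * real d * exp (- t\<^sup>2 / (2 * real (n div d)))"
  unfolding manip_est_eq_bind
proof (rule prob_bind_pmf_le_add[where a = 0 and B = "{}", simplified])
  fix Cf assume "Cf \<in> set_pmf M"
  moreover obtain C f where Cf: "Cf = (C, f)" by fastforce
  ultimately have C: "C \<subseteq> {..<n}" and m: "card C = m"
    and f: "\<forall>S. \<forall>i\<in>C. f S i \<in> {rr_scale \<epsilon>, - rr_scale \<epsilon>}"
    using M unfolding valid_attacker_def by fast+
  thus "measure_pmf.prob (case Cf of (C, f) \<Rightarrow> pmf_of_set (est_partitions n d) \<bind>
             (\<lambda>g. map_pmf (est_aggregate n d g) (manip_messages n \<epsilon> x C f g)))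
           {z. \<exists>j<d. \<bar>z j - 1 / real n * (\<Sum>i<n. x i j)\<bar>
                 \<ge> rr_scale \<epsilon> * (4 * (real d / real n) * t + 2 * (real m / real n))}
         \<le> 5 * real d * exp (- t\<^sup>2 / (2 * real (n div d)))"
    using prob_manip_attack_error_ge[OF \<epsilon> d n x C f t] by (simp add: Cf m)
qed simp

lemma prob_manip_est_max_error_lt:
  fixes t :: real
  assumes \<epsilon>: "0 < \<epsilon>" and d: "0 < d" "d dvd n" and n: "0 < n" and x: "\<forall>i<n. \<forall>j<d. \<bar>x i j\<bar> \<le> 1"
    and M: "valid_attacker \<epsilon> m n M" and t: "0 \<le> t"
  shows "1 - 5 * real d * exp (- t\<^sup>2 / (2 * real (n div d)))
         \<le> measure_pmf.prob (manip_est n d \<epsilon> x M)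
              {z. (MAX j\<in>{..<d}. \<bar>z j - 1 / real n * (\<Sum>i<n. x i j)\<bar>)
                    < rr_scale \<epsilon> * (4 * (real d / real n) * t + 2 * (real m / real n))}"
proof -
  define bad where "bad = {z. \<exists>j<d. \<bar>z j - 1 / real n * (\<Sum>i<n. x i j)\<bar>
      \<ge> rr_scale \<epsilon> * (4 * (real d / real n) * t + 2 * (real m / real n))}"
  have "UNIV - bad = {z. (MAX j\<in>{..<d}. \<bar>z j - 1 / real n * (\<Sum>i<n. x i j)\<bar>)
      < rr_scale \<epsilon> * (4 * (real d / real n) * t + 2 * (real m / real n))}"
    using d by (subst Max_less_iff) (auto simp: bad_def not_le Ball_def)
  moreover have "measure_pmf.prob (manip_est n d \<epsilon> x M) bad \<le> 5 * real d * exp (- t\<^sup>2 / (2 * real (n div d)))"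
    unfolding bad_def by (rule prob_manip_est_error_ge[OF assms])
  ultimately show ?thesis
    using measure_pmf.prob_compl[of bad "manip_est n d \<epsilon> x M"] by simp
qed

lemma sqrt_rescale:
  fixes a k c L :: real
  assumes "a * k = 1" "0 \<le> a"
  shows "a * (c * sqrt (k * L)) = c * sqrt (a * L)"
proof -
  have "a * sqrt (k * L) = sqrt (a\<^sup>2 * (k * L))"
    using assms(2) by (simp add: real_sqrt_mult)
  also have "a\<^sup>2 * (k * L) = a * L"
    using assms(1) by (simp add: power2_eq_square mult.assoc)
  finally show ?thesis by (metis mult.left_commute)
qed

lemma prob_manip_est_max_error_lt_sqrt:
  fixes c L :: real
  assumes \<epsilon>: "0 < \<epsilon>" and d: "0 < d" "d dvd n" and n: "0 < n" and x: "\<forall>i<n. \<forall>j<d. \<bar>x i j\<bar> \<le> 1"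
    and M: "valid_attacker \<epsilon> m n M" and c: "0 \<le> c" and L: "0 \<le> L"
  shows "1 - 5 * real d * exp (- c\<^sup>2 * L / 2)
         \<le> measure_pmf.prob (manip_est n d \<epsilon> x M)
              {z. (MAX j\<in>{..<d}. \<bar>z j - 1 / real n * (\<Sum>i<n. x i j)\<bar>)
                    < (4 * c + 2) * rr_scale \<epsilon> * (sqrt (real d / real n * L) + real m / real n)}"
proof -
  define s where "s = sqrt (real d / real n * L)"
  define t where "t = c * sqrt (real (n div d) * L)"
  have k: "real d / real n * real (n div d) = 1" "0 < n div d" using d n by (auto elim!: dvdE)
  have "0 \<le> s" "0 \<le> t" using c L by (simp_all add: s_def t_def)
  have exponent: "- t\<^sup>2 / (2 * real (n div d)) = - c\<^sup>2 * L / 2"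
    using k L by (simp add: t_def power_mult_distrib)
  have "real d / real n * t = c * s"
    unfolding t_def s_def by (rule sqrt_rescale[OF k(1)]) simp
  hence "rr_scale \<epsilon> * (4 * (real d / real n) * t + 2 * (real m / real n))
      = rr_scale \<epsilon> * (4 * (c * s) + 2 * (real m / real n))"
    by (simp add: mult.assoc)
  also have "\<dots> \<le> (4 * c + 2) * rr_scale \<epsilon> * (s + real m / real n)"
    using mult_nonneg_nonneg[of "rr_scale \<epsilon>" "4 * c * (real m / real n) + 2 * s"]
      rr_scale_ge_1[OF \<epsilon>] c \<open>0 \<le> s\<close> by (simp add: algebra_simps)
  finally have radius: "rr_scale \<epsilon> * (4 * (real d / real n) * t + 2 * (real m / real n))
      \<le> (4 * c + 2) * rr_scale \<epsilon> * (s + real m / real n)" .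
  have "1 - 5 * real d * exp (- c\<^sup>2 * L / 2)
      \<le> measure_pmf.prob (manip_est n d \<epsilon> x M)
           {z. (MAX j\<in>{..<d}. \<bar>z j - 1 / real n * (\<Sum>i<n. x i j)\<bar>)
                 < rr_scale \<epsilon> * (4 * (real d / real n) * t + 2 * (real m / real n))}"
    using prob_manip_est_max_error_lt[OF \<epsilon> d n x M \<open>0 \<le> t\<close>] by (simp only: exponent)
  also have "\<dots> \<le> measure_pmf.prob (manip_est n d \<epsilon> x M)
           {z. (MAX j\<in>{..<d}. \<bar>z j - 1 / real n * (\<Sum>i<n. x i j)\<bar>)
                 < (4 * c + 2) * rr_scale \<epsilon> * (s + real m / real n)}"
    using radius by (intro measure_pmf.finite_measure_mono) auto
  finally show ?thesis by (simp only: s_def)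
qed

lemma five_d_exp_le:
  fixes \<beta> :: real
  assumes \<beta>: "0 < \<beta>" "\<beta> < 1" and d: "0 < d"
  defines "c \<equiv> sqrt (2 * (1 + ln 5 / ln (1 / \<beta>)))"
  shows "5 * real d * exp (- c\<^sup>2 * ln (real d / \<beta>) / 2) \<le> \<beta>"
proof -
  define L where "L = ln (real d / \<beta>)"
  have L0: "0 < ln (1 / \<beta>)" using \<beta> by simp
  have L: "ln (1 / \<beta>) \<le> L" using \<beta> d by (simp add: L_def ln_div)
  have "c\<^sup>2 = 2 * (1 + ln 5 / ln (1 / \<beta>))"
    unfolding c_def using L0 by (intro real_sqrt_pow2) (auto intro!: add_nonneg_nonneg divide_nonneg_nonneg)
  hence "- c\<^sup>2 * L / 2 = - L - ln 5 * (L / ln (1 / \<beta>))" by (simp add: field_simps)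
  also have "\<dots> \<le> - L - ln 5" using L L0 by (simp add: le_divide_eq)
  finally have "exp (- c\<^sup>2 * L / 2) \<le> exp (- L - ln 5)" by simp
  also have "exp (- L - ln 5) = \<beta> / (5 * real d)"
    using \<beta> d by (simp add: L_def exp_diff exp_minus)
  finally show ?thesis using d by (simp add: L_def field_simps)
qed

theorem mainTheorem10:
  fixes \<beta> :: real
  assumes "0 < \<beta>" "\<beta> < 1"
  shows "\<exists>c::real. \<forall>(\<epsilon>::real) (d::nat) (m::nat) (n::nat) (x::nat \<Rightarrow> nat \<Rightarrow> real) M.
     0 < \<epsilon> \<longrightarrow> 0 < d \<longrightarrow> 0 < m \<longrightarrow> m \<le> n \<longrightarrow> d dvd n \<longrightarrow>
     (\<forall>i<n. \<forall>j<d. \<bar>x i j\<bar> \<le> 1) \<longrightarrow> valid_attacker \<epsilon> m n M \<longrightarrow>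
     measure_pmf.prob (manip_est n d \<epsilon> x M)
       {z. (MAX j\<in>{..<d}. \<bar>z j - (1 / real n) * (\<Sum>i<n. x i j)\<bar>)
           < c * rr_scale \<epsilon> * (sqrt (real d / real n * ln (real d / \<beta>)) + real m / real n)}
     \<ge> 1 - \<beta>"
proof -
  define c where "c = sqrt (2 * (1 + ln 5 / ln (1 / \<beta>)))"
  have c: "0 \<le> c" using assms by (simp add: c_def)
  show ?thesis
  proof (intro exI[of _ "4 * c + 2"] allI impI)
    fix \<epsilon> :: real and d m n :: nat and x :: "nat \<Rightarrow> nat \<Rightarrow> real" and M
    assume \<epsilon>: "0 < \<epsilon>" and d: "0 < d" and m: "0 < m" "m \<le> n" and dvd: "d dvd n"
      and x: "\<forall>i<n. \<forall>j<d. \<bar>x i j\<bar> \<le> 1" and M: "valid_attacker \<epsilon> m n M"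
    have "1 - \<beta> \<le> 1 - 5 * real d * exp (- c\<^sup>2 * ln (real d / \<beta>) / 2)"
      using five_d_exp_le[OF assms d] by (simp add: c_def)
    also have "\<dots> \<le> measure_pmf.prob (manip_est n d \<epsilon> x M)
       {z. (MAX j\<in>{..<d}. \<bar>z j - (1 / real n) * (\<Sum>i<n. x i j)\<bar>)
           < (4 * c + 2) * rr_scale \<epsilon> * (sqrt (real d / real n * ln (real d / \<beta>)) + real m / real n)}"
      using assms d m by (intro prob_manip_est_max_error_lt_sqrt[OF \<epsilon> d dvd _ x M c]) auto
    finally show "measure_pmf.prob (manip_est n d \<epsilon> x M)
       {z. (MAX j\<in>{..<d}. \<bar>z j - (1 / real n) * (\<Sum>i<n. x i j)\<bar>)
           < (4 * c + 2) * rr_scale \<epsilon> * (sqrt (real d / real n * ln (real d / \<beta>)) + real m / real n)}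
       \<ge> 1 - \<beta>" .
  qed
qed

end
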